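(* Let $G$ be a quasitopological group. Then $G$ is dense-ultraconnected if and only if the topology of $G$ is indiscrete.
   Context: A quasitopological group is a group with a topology for which multiplication is separately continuous and inversion is continuous; no separation axioms assumed. A space is ultraconnected if it contains no two disjoint non-empty closed subsets; a space is dense-ultraconnected if every dense subset of it (with the subspace topology) is ultraconnected. *)

theory Defs
  imports "HOL-Analysis.Analysis" "HOL-Algebra.Group"
begin

definition quasitopological_group :: "('a, 'b) monoid_scheme \<Rightarrow> 'a topology \<Rightarrow> bool" where
  "quasitopological_group G T \<longleftrightarrow>
     group G \<and> topspace T = carrier G \<and>
     (\<forall>a \<in> carrier G. continuous_map T T (\<lambda>x. a \<otimes>\<^bsub>G\<^esub> x)) \<and>
     (\<forall>a \<in> carrier G. continuous_map T T (\<lambda>x. x \<otimes>\<^bsub>G\<^esub> a)) \<and>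
     continuous_map T T (\<lambda>x. inv\<^bsub>G\<^esub> x)"

definition ultraconnected_space :: "'a topology \<Rightarrow> bool" where
  "ultraconnected_space X \<longleftrightarrow>
     \<not> (\<exists>A B. closedin X A \<and> closedin X B \<and> A \<noteq> {} \<and> B \<noteq> {} \<and> A \<inter> B = {})"

definition dense_ultraconnected :: "'a topology \<Rightarrow> bool" where
  "dense_ultraconnected X \<longleftrightarrow>
     (\<forall>D. D \<subseteq> topspace X \<and> X closure_of D = topspace X \<longrightarrow>
          ultraconnected_space (subtopology X D))"

definition indiscrete_space :: "'a topology \<Rightarrow> bool" where
  "indiscrete_space X \<longleftrightarrow> (\<forall>U. openin X U \<longrightarrow> U = {} \<or> U = topspace X)"

end

theory Submission
  imports Defs
begin

text \<open>In a quasitopological group the map \<open>z \<mapsto> x z\<inverse> y\<close> is continuous and swaps \<open>x\<close>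
  and \<open>y\<close>, so the specialisation preorder \<open>y \<in> cl {x}\<close> is symmetric. An ultraconnected space
  with symmetric specialisation is indiscrete: the closures of any two points meet, and by
  symmetry and transitivity every point then lies in the closure of every other point, so a
  non-empty open set contains all points. Since a space is a dense subset of itself,
  dense-ultraconnected groups are indiscrete; conversely every subspace of an indiscrete space
  is indiscrete and hence ultraconnected.\<close>

lemma quasitopological_group_closure_of_singleton_sym:
  assumes q: "quasitopological_group G T"
    and x: "x \<in> carrier G" and y: "y \<in> carrier G"
    and y_cl: "y \<in> T closure_of {x}"
  shows "x \<in> T closure_of {y}"
proof -
  have gr: "group G"
    and L: "\<forall>a \<in> carrier G. continuous_map T T (\<lambda>z. a \<otimes>\<^bsub>G\<^esub> z)"
    and R: "\<forall>a \<in> carrier G. continuous_map T T (\<lambda>z. z \<otimes>\<^bsub>G\<^esub> a)"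
    and I: "continuous_map T T (\<lambda>z. inv\<^bsub>G\<^esub> z)"
    using q unfolding quasitopological_group_def by auto
  define f where "f = (\<lambda>z. z \<otimes>\<^bsub>G\<^esub> y) \<circ> (\<lambda>z. x \<otimes>\<^bsub>G\<^esub> z) \<circ> (\<lambda>z. inv\<^bsub>G\<^esub> z)"
  have "continuous_map T T f"
    unfolding f_def using L R I x y by (intro continuous_map_compose) auto
  then have "f ` (T closure_of {x}) \<subseteq> T closure_of (f ` {x})"
    by (rule continuous_map_image_closure_subset)
  moreover have "f x = y" "f y = x"
    unfolding f_def using x y by (simp_all add: group.r_inv[OF gr] group.l_inv[OF gr]
        group.inv_closed[OF gr] monoid.m_assoc[OF group.is_monoid[OF gr]] group.is_monoid[OF gr])
  ultimately show ?thesis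
    using y_cl by (metis image_empty image_insert image_subset_iff)
qed

lemma ultraconnected_space_closure_of_singletons_meet:
  assumes "ultraconnected_space X" "x \<in> topspace X" "y \<in> topspace X"
  shows "X closure_of {x} \<inter> X closure_of {y} \<noteq> {}"
  using assms unfolding ultraconnected_space_def
  by (metis closedin_closure_of closure_of_eq_empty empty_not_insert empty_subsetI insert_subset)

lemma ultraconnected_space_imp_indiscrete_space:
  assumes uc: "ultraconnected_space X"
    and sym: "\<And>x y. \<lbrakk>x \<in> topspace X; y \<in> topspace X; y \<in> X closure_of {x}\<rbrakk>
                     \<Longrightarrow> x \<in> X closure_of {y}"
  shows "indiscrete_space X"
  unfolding indiscrete_space_def
proof (intro allI impI)
  fix U assume U: "openin X U"
  show "U = {} \<or> U = topspace X"
  proof (cases "U = {}")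
    case False
    then obtain y where yU: "y \<in> U" by auto
    have y: "y \<in> topspace X" using U yU openin_subset by blast
    have "x \<in> U" if x: "x \<in> topspace X" for x
    proof -
      obtain z where zx: "z \<in> X closure_of {x}" and zy: "z \<in> X closure_of {y}"
        using ultraconnected_space_closure_of_singletons_meet[OF uc x y] by auto
      have z: "z \<in> topspace X" using zx in_closure_of by fastforce
      have "x \<in> X closure_of {z}" using sym[OF x z zx] .
      also have "\<dots> \<subseteq> X closure_of {y}" using zy by (simp add: closure_of_minimal)
      finally have "y \<in> X closure_of {x}" using sym x y by blast
      then show "x \<in> U" using U yU by (auto simp: in_closure_of)
    qed
    then show ?thesis using U openin_subset by blast
  qed simp
qed

lemma dense_ultraconnected_imp_ultraconnected_space:
  "dense_ultraconnected X \<Longrightarrow> ultraconnected_space X"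
  unfolding dense_ultraconnected_def
  by (metis closure_of_topspace order_refl subtopology_topspace)

lemma indiscrete_space_subtopology:
  assumes "indiscrete_space X"
  shows "indiscrete_space (subtopology X S)"
  using assms unfolding indiscrete_space_def openin_subtopology by auto

lemma indiscrete_imp_ultraconnected_space:
  assumes "indiscrete_space X"
  shows "ultraconnected_space X"
proof -
  have "C = topspace X" if "closedin X C" "C \<noteq> {}" for C
    using assms that closedin_subset unfolding indiscrete_space_def closedin_def by blast
  then show ?thesis unfolding ultraconnected_space_def by auto
qed

lemma indiscrete_imp_dense_ultraconnected:
  "indiscrete_space X \<Longrightarrow> dense_ultraconnected X"
  unfolding dense_ultraconnected_def
  by (simp add: indiscrete_imp_ultraconnected_space indiscrete_space_subtopology)

theorem mainTheorem20:
  fixes G :: "('a, 'b) monoid_scheme" and T :: "'a topology"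
  assumes "quasitopological_group G T"
  shows "dense_ultraconnected T \<longleftrightarrow> indiscrete_space T"
proof
  have "topspace T = carrier G"
    using assms unfolding quasitopological_group_def by auto
  then have sym: "\<And>x y. \<lbrakk>x \<in> topspace T; y \<in> topspace T; y \<in> T closure_of {x}\<rbrakk>
                          \<Longrightarrow> x \<in> T closure_of {y}"
    using quasitopological_group_closure_of_singleton_sym[OF assms] by blast
  assume "dense_ultraconnected T"
  then show "indiscrete_space T"
    using ultraconnected_space_imp_indiscrete_space dense_ultraconnected_imp_ultraconnected_space
      sym by blast
next
  show "indiscrete_space T \<Longrightarrow> dense_ultraconnected T"
    by (rule indiscrete_imp_dense_ultraconnected)
qed

end
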